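(* Let $\mathcal{M}$ be a nontrivial, unbounded graph matroid family with dimensionality $d$, threshold $t$ and rank function $r$. Let $r_0=r(K_t)-d\cdot t$, let $\varepsilon=\frac{1}{6d}$, and let $\delta$ be a positive integer with $\delta\ge\max(6r_0,t)$ such that every graph with minimum degree at least $\delta$ has a $d$-dominating set of size at most $\varepsilon|V(G)|$. If $G=(V,E)$ is a graph with minimum degree at least $\delta$, then there is a vertex $v_0\in V$ such that $r(G)\le r(G-v_0)+d$.
   Context: All graphs are finite and simple and have no isolated vertices. A graph matroid family $\mathcal{M}$ assigns to every graph $G$ a matroid $\mathcal{M}(G)$ on $E(G)$ such that (i) every graph isomorphism $V(G)\to V(H)$ induces an isomorphism $\mathcal{M}(G)\to\mathcal{M}(H)$, and (ii) for every subgraph $H$ of $G$, $\mathcal{M}(H)$ is the restriction of $\mathcal{M}(G)$ to $E(H)$. $r(G)$ is the rank of $\mathcal{M}(G)$. $\mathcal{M}$ is nontrivial if some graph $G$ has $r(G)<|E(G)|$, unbounded if $r(K_n)$ is unbounded. An $\mathcal{M}$-circuit is a graph $C$ with $r(C)<|E(C)|$ and $r(C-e)=|E(C)|-1$ for all edges $e$. Dimensionality $d$: minimum over $\mathcal{M}$-circuits of (minimum degree $-1$); threshold $t$: minimum of $|V(C)|-1$ over $\mathcal{M}$-circuits $C$ of minimum degree $d+1$. A set $U\subseteq V(G)$ is $d$-dominating in $G$ if every vertex of $V(G)\setminus U$ has at least $d$ neighbours in $U$. *)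

theory Defs
  imports Complex_Main
begin

text \<open>Graphs: finite simple graphs without isolated vertices, with vertices in nat,
  represented by their edge set (each edge a 2-element vertex set).\<close>

type_synonym graph = "nat set set"

definition is_graph :: "graph \<Rightarrow> bool" where
  "is_graph G \<longleftrightarrow> finite G \<and> (\<forall>e\<in>G. card e = 2)"

definition verts :: "graph \<Rightarrow> nat set" where
  "verts G = \<Union>G"

definition degree :: "graph \<Rightarrow> nat \<Rightarrow> nat" where
  "degree G v = card {e\<in>G. v \<in> e}"

definition min_degree :: "graph \<Rightarrow> nat" where
  "min_degree G = Min (degree G ` verts G)"

definition delete_vertex :: "graph \<Rightarrow> nat \<Rightarrow> graph" where
  "delete_vertex G v = {e\<in>G. v \<notin> e}"

definition complete_graph :: "nat \<Rightarrow> graph" where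
  "complete_graph n = {{i, j} | i j. i < n \<and> j < n \<and> i \<noteq> j}"

definition d_dominating :: "graph \<Rightarrow> nat \<Rightarrow> nat set \<Rightarrow> bool" where
  "d_dominating G d U \<longleftrightarrow> U \<subseteq> verts G \<and>
     (\<forall>v\<in>verts G - U. d \<le> card {u\<in>U. {u, v} \<in> G})"

definition matroid :: "'a set \<Rightarrow> ('a set \<Rightarrow> bool) \<Rightarrow> bool" where
  "matroid S I \<longleftrightarrow> finite S \<and> I {} \<and> (\<forall>X. I X \<longrightarrow> X \<subseteq> S) \<and>
     (\<forall>X Y. I Y \<and> X \<subseteq> Y \<longrightarrow> I X) \<and>
     (\<forall>X Y. I X \<and> I Y \<and> card X < card Y \<longrightarrow> (\<exists>y\<in>Y - X. I (insert y X)))"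

definition mrank :: "('a set \<Rightarrow> bool) \<Rightarrow> 'a set \<Rightarrow> nat" where
  "mrank I X = Max (card ` {Y. Y \<subseteq> X \<and> I Y})"

definition graph_matroid_family :: "(graph \<Rightarrow> nat set set \<Rightarrow> bool) \<Rightarrow> bool" where
  "graph_matroid_family M \<longleftrightarrow>
     (\<forall>G. is_graph G \<longrightarrow> matroid G (M G)) \<and>
     (\<forall>G H f. is_graph G \<and> is_graph H \<and> bij_betw f (verts G) (verts H) \<and>
        (\<forall>u\<in>verts G. \<forall>v\<in>verts G. {u, v} \<in> G \<longleftrightarrow> {f u, f v} \<in> H) \<longrightarrow>
        (\<forall>F. F \<subseteq> G \<longrightarrow> (M G F \<longleftrightarrow> M H ((`) f ` F)))) \<and>
     (\<forall>G H. is_graph G \<and> H \<subseteq> G \<longrightarrow> (\<forall>F. M H F \<longleftrightarrow> (M G F \<and> F \<subseteq> H)))"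

definition grank :: "(graph \<Rightarrow> nat set set \<Rightarrow> bool) \<Rightarrow> graph \<Rightarrow> nat" where
  "grank M G = mrank (M G) G"

definition nontrivial_family :: "(graph \<Rightarrow> nat set set \<Rightarrow> bool) \<Rightarrow> bool" where
  "nontrivial_family M \<longleftrightarrow> (\<exists>G. is_graph G \<and> grank M G < card G)"

definition unbounded_family :: "(graph \<Rightarrow> nat set set \<Rightarrow> bool) \<Rightarrow> bool" where
  "unbounded_family M \<longleftrightarrow> (\<forall>k. \<exists>n. k < grank M (complete_graph n))"

definition is_circuit :: "(graph \<Rightarrow> nat set set \<Rightarrow> bool) \<Rightarrow> graph \<Rightarrow> bool" where
  "is_circuit M C \<longleftrightarrow> is_graph C \<and> grank M C < card C \<and>
     (\<forall>e\<in>C. grank M (C - {e}) = card C - 1)"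

definition dimensionality :: "(graph \<Rightarrow> nat set set \<Rightarrow> bool) \<Rightarrow> nat" where
  "dimensionality M = (LEAST k. \<exists>C. is_circuit M C \<and> min_degree C - 1 = k)"

definition threshold :: "(graph \<Rightarrow> nat set set \<Rightarrow> bool) \<Rightarrow> nat" where
  "threshold M = (LEAST k. \<exists>C. is_circuit M C \<and> min_degree C = dimensionality M + 1
      \<and> card (verts C) - 1 = k)"

end

theory Submission
  imports Defs
begin

text \<open>
  Let \<open>n = |V(G)|\<close>. A threshold circuit has \<open>t + 1\<close> vertices and a vertex \<open>w\<^sub>0\<close> of degree
  \<open>d + 1\<close>. Embedding it into \<open>K\<^sub>S + v\<close> (with \<open>|S| \<ge> t\<close>) so that \<open>w\<^sub>0\<close> goes to \<open>v\<close> and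
  \<open>d\<close> of its edges go to a fixed star from \<open>v\<close> shows that every other edge at \<open>v\<close> is
  spanned by \<open>K\<^sub>S\<close> and that star. So adding a vertex to a complete graph raises the rank by
  at most \<open>d\<close>, and \<open>r(G) \<le> r(K\<^sub>n) \<le> r\<^sub>0 + d n\<close>.

  Given a small \<open>d\<close>-dominating set \<open>U\<close>, pick \<open>d\<close> edges from each \<open>w \<in> W = V - U\<close> into \<open>U\<close>.
  This star forest is independent, because every circuit has minimum degree \<open>\<ge> d + 1\<close>.
  Extend it to a basis \<open>B\<close>. The at most \<open>r\<^sub>0 + d |U|\<close> edges of \<open>B\<close> outside the forest
  cover fewer than \<open>|W|\<close> vertices. So some \<open>w \<in> W\<close> meets only its \<open>d\<close> forest edges of \<open>B\<close>,
  and deleting \<open>w\<close> costs at most \<open>d\<close> in rank.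
\<close>

section \<open>Matroid rank\<close>

lemma finite_card_indep_subsets: "finite X \<Longrightarrow> finite (card ` {Y. Y \<subseteq> X \<and> I Y})"
  by (rule finite_imageI) (rule finite_subset[of _ "Pow X"], auto)

lemma card_le_mrank: "finite X \<Longrightarrow> Y \<subseteq> X \<Longrightarrow> I Y \<Longrightarrow> card Y \<le> mrank I X"
  unfolding mrank_def by (rule Max_ge[OF finite_card_indep_subsets]) auto

lemma mrank_attained: "finite X \<Longrightarrow> I {} \<Longrightarrow> \<exists>Y. Y \<subseteq> X \<and> I Y \<and> card Y = mrank I X"
proof -
  assume "finite X" "I {}"
  then have "mrank I X \<in> card ` {Y. Y \<subseteq> X \<and> I Y}"
    unfolding mrank_def by (intro Max_in finite_card_indep_subsets) auto
  then show ?thesis by auto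
qed

lemma mrank_le_card: "finite X \<Longrightarrow> I {} \<Longrightarrow> mrank I X \<le> card X"
  by (metis card_mono mrank_attained)

lemma mrank_mono: "finite X' \<Longrightarrow> X \<subseteq> X' \<Longrightarrow> I {} \<Longrightarrow> mrank I X \<le> mrank I X'"
  by (metis finite_subset mrank_attained card_le_mrank order_trans)

lemma matroid_empty_indep: "matroid S I \<Longrightarrow> I {}"
  unfolding matroid_def by blast

lemma matroid_indep_subset: "matroid S I \<Longrightarrow> I Y \<Longrightarrow> X \<subseteq> Y \<Longrightarrow> I X"
  unfolding matroid_def by blast

lemma matroid_augment:
  "matroid S I \<Longrightarrow> I X \<Longrightarrow> I Y \<Longrightarrow> card X < card Y \<Longrightarrow> \<exists>y\<in>Y - X. I (insert y X)"
  unfolding matroid_def by blast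

lemma card_maximal_indep_eq_mrank:
  assumes m: "matroid S I" and fin: "finite X" and "J \<subseteq> X" "I J"
    and maximal: "\<forall>x\<in>X - J. \<not> I (insert x J)"
  shows "card J = mrank I X"
proof -
  obtain Y where Y: "Y \<subseteq> X" "I Y" "card Y = mrank I X"
    using mrank_attained[of X I] fin matroid_empty_indep[OF m] by blast
  have "\<not> card J < card Y"
  proof
    assume "card J < card Y"
    then obtain y where "y \<in> Y - J" "I (insert y J)"
      using matroid_augment[OF m \<open>I J\<close> \<open>I Y\<close>] by blast
    then show False using maximal Y(1) by blast
  qed
  moreover have "card J \<le> mrank I X" using card_le_mrank fin \<open>J \<subseteq> X\<close> \<open>I J\<close> by blast
  ultimately show ?thesis using Y by linarith
qed

lemma matroid_extend_to_maximal_indep: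
  assumes fin: "finite X" and "J \<subseteq> X" "I J"
  shows "\<exists>J'. J \<subseteq> J' \<and> J' \<subseteq> X \<and> I J' \<and> (\<forall>x\<in>X - J'. \<not> I (insert x J'))"
proof -
  let ?P = "\<lambda>J'. J \<subseteq> J' \<and> J' \<subseteq> X \<and> I J'"
  obtain J' where J': "?P J'" and least: "\<forall>K. ?P K \<longrightarrow> card X - card J' \<le> card X - card K"
    using ex_has_least_nat[of ?P J "\<lambda>K. card X - card K"] assms by blast
  have "\<not> I (insert x J')" if x: "x \<in> X - J'" for x
  proof
    assume "I (insert x J')"
    then have "?P (insert x J')" using J' x by auto
    then have "card X - card J' \<le> card X - card (insert x J')" using least by blast
    moreover have "card (insert x J') = Suc (card J')"
      using x J' fin finite_subset[of J' X] by simp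
    moreover have "card (insert x J') \<le> card X" using x J' fin by (intro card_mono) auto
    ultimately show False by linarith
  qed
  then show ?thesis using J' by blast
qed

lemma mrank_indep: "matroid S I \<Longrightarrow> finite Y \<Longrightarrow> I Y \<Longrightarrow> mrank I Y = card Y"
  using card_maximal_indep_eq_mrank[of S I Y Y] by auto

lemma indep_if_mrank_eq_card: "matroid S I \<Longrightarrow> finite X \<Longrightarrow> mrank I X = card X \<Longrightarrow> I X"
  by (metis card_subset_eq matroid_empty_indep mrank_attained)

lemma mrank_Un_le_card:
  assumes m: "matroid S I" and fin: "finite X" "finite Z"
  shows "mrank I (X \<union> Z) \<le> mrank I X + card Z"
proof -
  obtain Y where Y: "Y \<subseteq> X \<union> Z" "I Y" "card Y = mrank I (X \<union> Z)"
    using mrank_attained[of "X \<union> Z" I] fin matroid_empty_indep[OF m] by auto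
  have "card (Y \<inter> X) \<le> mrank I X"
    using card_le_mrank[OF fin(1), of "Y \<inter> X" I] matroid_indep_subset[OF m Y(2)] by auto
  moreover have "Y \<subseteq> (Y \<inter> X) \<union> Z" using Y by auto
  then have "card Y \<le> card (Y \<inter> X) + card Z"
    by (meson card_Un_le card_mono fin finite_Int finite_UnI order_trans)
  ultimately show ?thesis using Y by linarith
qed

lemma mrank_insert_spanned:
  assumes m: "matroid S I" and fin: "finite X" and "Z \<subseteq> X" "I Z" and dep: "\<not> I (insert e Z)"
  shows "mrank I (insert e X) = mrank I X"
proof -
  obtain J where J: "Z \<subseteq> J" "J \<subseteq> insert e X" "I J" "\<forall>x\<in>insert e X - J. \<not> I (insert x J)"
    using matroid_extend_to_maximal_indep[of "insert e X" Z I] assms by blast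
  have "e \<notin> J" using J dep matroid_indep_subset[OF m, of J "insert e Z"] by blast
  then have "J \<subseteq> X" using J by auto
  have "card J = mrank I (insert e X)" using card_maximal_indep_eq_mrank[OF m _ J(2-4)] fin by simp
  moreover have "card J = mrank I X"
    using card_maximal_indep_eq_mrank[OF m fin \<open>J \<subseteq> X\<close> J(3)] J(4) by blast
  ultimately show ?thesis by simp
qed

lemma mrank_Un_spanned:
  assumes m: "matroid S I" and "finite X" "finite F"
    and spanned: "\<forall>e\<in>F. \<exists>Z\<subseteq>X. I Z \<and> \<not> I (insert e Z)"
  shows "mrank I (X \<union> F) = mrank I X"
  using \<open>finite F\<close> spanned
proof (induction F rule: finite_induct)
  case (insert e F)
  then obtain Z where "Z \<subseteq> X" "I Z" "\<not> I (insert e Z)" by blast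
  then have "mrank I (insert e (X \<union> F)) = mrank I (X \<union> F)"
    using mrank_insert_spanned[OF m] insert.hyps \<open>finite X\<close> by blast
  then show ?case using insert by simp
qed simp

section \<open>Graphs\<close>

lemma is_graph_subset: "is_graph G \<Longrightarrow> H \<subseteq> G \<Longrightarrow> is_graph H"
  unfolding is_graph_def by (auto intro: finite_subset)

lemma finite_verts: "is_graph G \<Longrightarrow> finite (verts G)"
  unfolding is_graph_def verts_def by (metis card.infinite finite_Union zero_neq_numeral)

lemma edge_subset_verts: "e \<in> G \<Longrightarrow> e \<subseteq> verts G"
  unfolding verts_def by auto

lemma edge_doubleton: "is_graph G \<Longrightarrow> e \<in> G \<Longrightarrow> \<exists>a b. a \<noteq> b \<and> e = {a, b}"
  unfolding is_graph_def by (metis card_2_iff)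

lemma card_verts_le: "is_graph G \<Longrightarrow> card (verts G) \<le> 2 * card G"
proof -
  assume G: "is_graph G"
  have "card (verts G) \<le> sum card G" unfolding verts_def by (rule card_Union_le_sum_card)
  also have "sum card G = 2 * card G" using G unfolding is_graph_def by simp
  finally show ?thesis .
qed

definition neighbours :: "graph \<Rightarrow> nat \<Rightarrow> nat set" where
  "neighbours G v = {u. {v, u} \<in> G}"

lemma neighbours_subset: "is_graph G \<Longrightarrow> neighbours G v \<subseteq> verts G - {v}"
proof
  fix u assume G: "is_graph G" and u: "u \<in> neighbours G v"
  then have "{v, u} \<in> G" unfolding neighbours_def by simp
  moreover from this have "u \<noteq> v" using G unfolding is_graph_def by force
  ultimately show "u \<in> verts G - {v}" unfolding verts_def by auto
qed

lemma edges_at_eq_neighbours: "is_graph G \<Longrightarrow> {e\<in>G. v \<in> e} = (\<lambda>u. {v, u}) ` neighbours G v"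
proof (intro set_eqI iffI)
  fix e assume G: "is_graph G" and e: "e \<in> {e\<in>G. v \<in> e}"
  then obtain a b where "a \<noteq> b" "e = {a, b}" using edge_doubleton by blast
  with e have "e = {v, if a = v then b else a}" by auto
  with e show "e \<in> (\<lambda>u. {v, u}) ` neighbours G v" unfolding neighbours_def by auto
qed (auto simp: neighbours_def)

lemma degree_eq_card_neighbours: "is_graph G \<Longrightarrow> degree G v = card (neighbours G v)"
proof -
  assume G: "is_graph G"
  have "inj_on (\<lambda>u. {v, u}) (neighbours G v)" by (auto intro: inj_onI simp: doubleton_eq_iff)
  then show ?thesis unfolding degree_def edges_at_eq_neighbours[OF G] by (rule card_image)
qed

lemma degree_le_card_verts: "is_graph G \<Longrightarrow> v \<in> verts G \<Longrightarrow> degree G v \<le> card (verts G) - 1"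
proof -
  assume G: "is_graph G" and v: "v \<in> verts G"
  have "degree G v \<le> card (verts G - {v})"
    unfolding degree_eq_card_neighbours[OF G]
    by (intro card_mono neighbours_subset G) (simp add: finite_verts[OF G])
  then show ?thesis using v by simp
qed

lemma degree_pos: "is_graph G \<Longrightarrow> v \<in> verts G \<Longrightarrow> 0 < degree G v"
  unfolding degree_def is_graph_def verts_def by (auto simp: card_gt_0_iff)

lemma degree_mono: "is_graph G \<Longrightarrow> H \<subseteq> G \<Longrightarrow> degree H v \<le> degree G v"
  unfolding degree_def is_graph_def by (intro card_mono) auto

lemma min_degree_le: "is_graph G \<Longrightarrow> v \<in> verts G \<Longrightarrow> min_degree G \<le> degree G v"
  unfolding min_degree_def by (simp add: finite_verts)

lemma verts_nonempty: "is_graph G \<Longrightarrow> G \<noteq> {} \<Longrightarrow> verts G \<noteq> {}"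
  using edge_doubleton unfolding verts_def by fastforce

lemma min_degree_attained: "is_graph G \<Longrightarrow> G \<noteq> {} \<Longrightarrow> \<exists>v\<in>verts G. min_degree G = degree G v"
proof -
  assume "is_graph G" "G \<noteq> {}"
  then have "min_degree G \<in> degree G ` verts G"
    unfolding min_degree_def by (intro Min_in) (auto simp: finite_verts verts_nonempty)
  then show ?thesis by auto
qed

lemma min_degree_less_card_verts:
  assumes "is_graph G" "G \<noteq> {}"
  shows "min_degree G < card (verts G)"
proof -
  obtain v where v: "v \<in> verts G" "min_degree G = degree G v"
    using min_degree_attained assms by blast
  have "degree G v \<le> card (verts G) - 1" using degree_le_card_verts assms(1) v(1) by blast
  moreover have "0 < degree G v" using degree_pos assms(1) v(1) by blast
  ultimately show ?thesis using v(2) by linarith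
qed

lemma is_graph_image:
  assumes G: "is_graph G" and inj: "inj_on f (verts G)"
  shows "is_graph ((`) f ` G)"
  unfolding is_graph_def
proof
  show "finite ((`) f ` G)" using G unfolding is_graph_def by simp
  have "card (f ` e) = 2" if "e \<in> G" for e
  proof -
    have "inj_on f e" using inj_on_subset[OF inj edge_subset_verts[OF that]] .
    then have "card (f ` e) = card e" by (rule card_image)
    then show ?thesis using that G unfolding is_graph_def by simp
  qed
  then show "\<forall>e\<in>(`) f ` G. card e = 2" by blast
qed

lemma inj_on_image_edges: "inj_on f (verts G) \<Longrightarrow> inj_on ((`) f) G"
proof (rule inj_onI)
  fix x y assume "inj_on f (verts G)" "x \<in> G" "y \<in> G" "f ` x = f ` y"
  then show "x = y" using inj_on_image_eq_iff edge_subset_verts by metis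
qed

section \<open>Graph matroid families and circuits\<close>

lemma family_matroid: "graph_matroid_family M \<Longrightarrow> is_graph G \<Longrightarrow> matroid G (M G)"
  unfolding graph_matroid_family_def by (drule conjunct1) (erule allE, erule mp)

lemma family_restrict:
  "graph_matroid_family M \<Longrightarrow> is_graph G \<Longrightarrow> H \<subseteq> G \<Longrightarrow> M H F \<longleftrightarrow> M G F \<and> F \<subseteq> H"
  unfolding graph_matroid_family_def by (drule conjunct2, drule conjunct2) blast

lemma family_image_indep_iff:
  assumes fam: "graph_matroid_family M" and G: "is_graph G" and inj: "inj_on f (verts G)"
    and "F \<subseteq> G"
  shows "M ((`) f ` G) ((`) f ` F) \<longleftrightarrow> M G F"
proof -
  let ?H = "(`) f ` G"
  have "verts ?H = f ` verts G" unfolding verts_def by auto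
  then have bij: "bij_betw f (verts G) (verts ?H)" using inj by (simp add: bij_betw_def)
  have "\<forall>u\<in>verts G. \<forall>v\<in>verts G. {u, v} \<in> G \<longleftrightarrow> {f u, f v} \<in> ?H"
  proof (intro ballI iffI)
    fix u v assume uv: "u \<in> verts G" "v \<in> verts G" "{f u, f v} \<in> ?H"
    then obtain e where e: "e \<in> G" "{f u, f v} = f ` e" by auto
    then have "f ` {u, v} = f ` e" by simp
    then have "{u, v} = e"
      using inj_on_image_eq_iff[OF inj, of "{u, v}" e] uv edge_subset_verts[OF e(1)] by auto
    then show "{u, v} \<in> G" using e by simp
  qed (metis image_empty image_eqI image_insert)
  then have "\<forall>F. F \<subseteq> G \<longrightarrow> (M G F \<longleftrightarrow> M ?H ((`) f ` F))"
    using fam G is_graph_image[OF G inj] bij unfolding graph_matroid_family_def by blast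
  then show ?thesis using \<open>F \<subseteq> G\<close> by blast
qed

lemma grank_image:
  assumes fam: "graph_matroid_family M" and G: "is_graph G" and inj: "inj_on f (verts G)"
  shows "grank M ((`) f ` G) = grank M G"
proof -
  let ?img = "(`) ((`) f)"
  have injE: "inj_on ((`) f) G" using inj_on_image_edges[OF inj] .
  have "{Y. Y \<subseteq> (`) f ` G \<and> M ((`) f ` G) Y} = ?img ` {F. F \<subseteq> G \<and> M G F}"
    using family_image_indep_iff[OF fam G inj] by (auto simp: subset_image_iff)
  moreover have "card (?img F) = card F" if "F \<subseteq> G" for F
    using card_image inj_on_subset[OF injE that] by blast
  then have "card ` ?img ` {F. F \<subseteq> G \<and> M G F} = card ` {F. F \<subseteq> G \<and> M G F}"
    by (auto simp: image_image intro!: image_cong)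
  ultimately show ?thesis unfolding grank_def mrank_def by simp
qed

lemma grank_subgraph:
  "graph_matroid_family M \<Longrightarrow> is_graph G \<Longrightarrow> H \<subseteq> G \<Longrightarrow> grank M H = mrank (M G) H"
proof -
  assume "graph_matroid_family M" "is_graph G" "H \<subseteq> G"
  then have "{Y. Y \<subseteq> H \<and> M H Y} = {Y. Y \<subseteq> H \<and> M G Y}" using family_restrict by blast
  then show ?thesis unfolding grank_def mrank_def by simp
qed

lemma grank_mono: "graph_matroid_family M \<Longrightarrow> is_graph G \<Longrightarrow> H \<subseteq> G \<Longrightarrow> grank M H \<le> grank M G"
proof -
  assume fam: "graph_matroid_family M" and G: "is_graph G" and "H \<subseteq> G"
  have "mrank (M G) H \<le> mrank (M G) G"
    using mrank_mono \<open>H \<subseteq> G\<close> G matroid_empty_indep[OF family_matroid[OF fam G]]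
    unfolding is_graph_def by blast
  then show ?thesis using grank_subgraph[OF fam G \<open>H \<subseteq> G\<close>] unfolding grank_def by simp
qed

lemma dependent_contains_circuit:
  assumes fam: "graph_matroid_family M" and G: "is_graph G" and "D \<subseteq> G" and dep: "\<not> M G D"
  shows "\<exists>C\<subseteq>D. is_circuit M C"
proof -
  let ?P = "\<lambda>C. C \<subseteq> D \<and> \<not> M G C"
  obtain C where C: "?P C" and least: "\<forall>C'. ?P C' \<longrightarrow> card C \<le> card C'"
    using ex_has_least_nat[of ?P D card] \<open>D \<subseteq> G\<close> dep by blast
  have CG: "C \<subseteq> G" using C \<open>D \<subseteq> G\<close> by auto
  have fC: "finite C" using G CG unfolding is_graph_def by (auto intro: finite_subset)
  have gC: "is_graph C" using is_graph_subset[OF G CG] .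
  have indep_C: "M C F \<longleftrightarrow> M G F \<and> F \<subseteq> C" for F using family_restrict[OF fam G CG] .
  have "\<not> M C C" using indep_C C by blast
  then have "grank M C \<noteq> card C"
    using indep_if_mrank_eq_card[OF family_matroid[OF fam gC] fC] unfolding grank_def by blast
  moreover have "grank M C \<le> card C"
    unfolding grank_def using mrank_le_card fC matroid_empty_indep[OF family_matroid[OF fam gC]] by blast
  moreover have "grank M (C - {e}) = card C - 1" if e: "e \<in> C" for e
  proof -
    have "M G (C - {e})"
    proof (rule ccontr)
      assume "\<not> M G (C - {e})"
      moreover have "C - {e} \<subseteq> D" using C by blast
      ultimately have "card C \<le> card (C - {e})" using least by blast
      then show False using card_Diff1_less[OF fC e] by linarith
    qed
    have sub: "C - {e} \<subseteq> G" using CG by blast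
    with \<open>M G (C - {e})\<close> have "M (C - {e}) (C - {e})" using family_restrict[OF fam G sub] by blast
    then have "grank M (C - {e}) = card (C - {e})"
      unfolding grank_def using mrank_indep[OF family_matroid[OF fam is_graph_subset[OF G sub]]] fC
      by simp
    then show ?thesis using e fC by simp
  qed
  ultimately show ?thesis using gC C unfolding is_circuit_def by auto
qed

lemma is_graph_circuit: "is_circuit M C \<Longrightarrow> is_graph C"
  unfolding is_circuit_def by simp

lemma circuit_dependent:
  assumes fam: "graph_matroid_family M" and C: "is_circuit M C" and "C \<subseteq> G" "is_graph G"
  shows "\<not> M G C"
proof -
  have gC: "is_graph C" using is_graph_circuit[OF C] .
  have "\<not> M C C"
    using C mrank_indep[OF family_matroid[OF fam gC]] gC unfolding is_circuit_def grank_def is_graph_def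
    by auto
  then show ?thesis using family_restrict[OF fam \<open>is_graph G\<close> \<open>C \<subseteq> G\<close>] by blast
qed

lemma circuit_minus_edge_indep:
  assumes fam: "graph_matroid_family M" and C: "is_circuit M C" and "e \<in> C" and "C \<subseteq> G" "is_graph G"
  shows "M G (C - {e})"
proof -
  have gC: "is_graph C" using is_graph_circuit[OF C] .
  have fC: "finite C" using gC unfolding is_graph_def by simp
  have gE: "is_graph (C - {e})" using is_graph_subset[OF gC] by blast
  have "grank M (C - {e}) = card C - 1" using C \<open>e \<in> C\<close> unfolding is_circuit_def by blast
  then have "grank M (C - {e}) = card (C - {e})" using \<open>e \<in> C\<close> fC by simp
  then have "M (C - {e}) (C - {e})"
    unfolding grank_def using indep_if_mrank_eq_card[OF family_matroid[OF fam gE]] fC by simp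
  then show ?thesis using family_restrict[OF fam \<open>is_graph G\<close>, of "C - {e}"] \<open>C \<subseteq> G\<close> by blast
qed

lemma circuit_nonempty: "is_circuit M C \<Longrightarrow> C \<noteq> {}"
  unfolding is_circuit_def by auto

lemma is_circuit_image:
  assumes fam: "graph_matroid_family M" and C: "is_circuit M C" and inj: "inj_on f (verts C)"
  shows "is_circuit M ((`) f ` C)"
proof -
  let ?C' = "(`) f ` C"
  have gC: "is_graph C" using is_graph_circuit[OF C] .
  have rank_C: "grank M C < card C" and rank_minus: "\<forall>e\<in>C. grank M (C - {e}) = card C - 1"
    using C unfolding is_circuit_def by blast+
  have injE: "inj_on ((`) f) C" using inj_on_image_edges[OF inj] .
  have card_C': "card ?C' = card C" using card_image[OF injE] .
  have "grank M ?C' < card ?C'" using rank_C grank_image[OF fam gC inj] card_C' by simp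
  moreover have "grank M (?C' - {e'}) = card ?C' - 1" if "e' \<in> ?C'" for e'
  proof -
    obtain e where e: "e \<in> C" "e' = f ` e" using \<open>e' \<in> ?C'\<close> by blast
    have "?C' - {e'} = (`) f ` (C - {e})"
      using inj_on_image_set_diff[OF injE, of C "{e}"] e by simp
    moreover have "inj_on f (verts (C - {e}))"
      by (rule inj_on_subset[OF inj]) (auto simp: verts_def)
    then have "grank M ((`) f ` (C - {e})) = grank M (C - {e})"
      using grank_image[OF fam is_graph_subset[OF gC, of "C - {e}"]] by blast
    ultimately show ?thesis using rank_minus e(1) card_C' by simp
  qed
  ultimately show ?thesis using is_graph_image[OF gC inj] unfolding is_circuit_def by blast
qed

lemma degree_circuit_ge:
  assumes fam: "graph_matroid_family M" and C: "is_circuit M C" and "v \<in> verts C"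
  shows "dimensionality M + 1 \<le> degree C v"
proof -
  have "dimensionality M \<le> min_degree C - 1"
    unfolding dimensionality_def by (rule Least_le) (use C in blast)
  moreover have "min_degree C \<le> degree C v" "0 < degree C v"
    using min_degree_le degree_pos is_graph_circuit[OF C] \<open>v \<in> verts C\<close> by blast+
  ultimately show ?thesis by linarith
qed

lemma circuit_exists:
  assumes fam: "graph_matroid_family M" and "nontrivial_family M"
  shows "\<exists>C. is_circuit M C"
proof -
  obtain G where G: "is_graph G" "grank M G < card G"
    using \<open>nontrivial_family M\<close> unfolding nontrivial_family_def by blast
  have "\<not> M G G"
    using G mrank_indep[OF family_matroid[OF fam G(1)]] unfolding grank_def is_graph_def by auto
  then show ?thesis using dependent_contains_circuit[OF fam G(1)] by blast
qed

lemma dimensionality_attained: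
  assumes fam: "graph_matroid_family M" and "nontrivial_family M"
  shows "\<exists>C. is_circuit M C \<and> min_degree C = dimensionality M + 1"
proof -
  have "\<exists>k C. is_circuit M C \<and> min_degree C - 1 = k"
    using circuit_exists[OF assms] by blast
  then have "\<exists>C. is_circuit M C \<and> min_degree C - 1 = dimensionality M"
    unfolding dimensionality_def by (rule LeastI_ex)
  then obtain C where C: "is_circuit M C" "min_degree C - 1 = dimensionality M" by blast
  obtain v where "v \<in> verts C" "min_degree C = degree C v"
    using min_degree_attained[OF is_graph_circuit circuit_nonempty, OF C(1) C(1)] by blast
  then have "min_degree C = dimensionality M + 1"
    using C(2) degree_pos[OF is_graph_circuit[OF C(1)]] by fastforce
  then show ?thesis using C(1) by blast
qed

lemma threshold_circuit_exists:
  assumes fam: "graph_matroid_family M" and "nontrivial_family M"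
  obtains C w where "is_circuit M C" "w \<in> verts C" "degree C w = dimensionality M + 1"
    "card (verts C) = threshold M + 1"
proof -
  have "\<exists>k C. is_circuit M C \<and> min_degree C = dimensionality M + 1 \<and> card (verts C) - 1 = k"
    using dimensionality_attained[OF assms] by blast
  then have "\<exists>C. is_circuit M C \<and> min_degree C = dimensionality M + 1
      \<and> card (verts C) - 1 = threshold M"
    unfolding threshold_def by (rule LeastI_ex)
  then obtain C where C: "is_circuit M C" "min_degree C = dimensionality M + 1"
    "card (verts C) - 1 = threshold M" by blast
  obtain w where w: "w \<in> verts C" "degree C w = dimensionality M + 1"
    using min_degree_attained[OF is_graph_circuit circuit_nonempty, OF C(1) C(1)] C(2) by auto
  then have "card (verts C) = threshold M + 1"
    using C(3) w(1) finite_verts[OF is_graph_circuit[OF C(1)]] card_gt_0_iff[of "verts C"] by force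
  with C(1) w show ?thesis by (rule that)
qed

section \<open>Rank of complete graphs\<close>

definition complete_on :: "nat set \<Rightarrow> graph" where
  "complete_on S = {{a, b} | a b. a \<in> S \<and> b \<in> S \<and> a \<noteq> b}"

lemma complete_onI: "a \<in> S \<Longrightarrow> b \<in> S \<Longrightarrow> a \<noteq> b \<Longrightarrow> {a, b} \<in> complete_on S"
  unfolding complete_on_def by blast

lemma is_graph_complete_on: "finite S \<Longrightarrow> is_graph (complete_on S)"
  unfolding is_graph_def complete_on_def
proof
  assume "finite S"
  show "finite {{a, b} |a b. a \<in> S \<and> b \<in> S \<and> a \<noteq> b}"
    by (rule finite_subset[of _ "Pow S"]) (auto simp: \<open>finite S\<close>)
qed auto

lemma complete_graph_eq_complete_on: "complete_graph n = complete_on {0..<n}"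
  unfolding complete_graph_def complete_on_def by auto

lemma complete_on_image: "inj_on f S \<Longrightarrow> (`) f ` complete_on S = complete_on (f ` S)"
proof
  assume inj: "inj_on f S"
  show "(`) f ` complete_on S \<subseteq> complete_on (f ` S)"
    using inj_onD[OF inj] by (fastforce simp: complete_on_def)
  show "complete_on (f ` S) \<subseteq> (`) f ` complete_on S"
  proof
    fix e assume "e \<in> complete_on (f ` S)"
    then obtain a b where "a \<in> S" "b \<in> S" "f a \<noteq> f b" "e = f ` {a, b}"
      unfolding complete_on_def by auto
    then show "e \<in> (`) f ` complete_on S" by (metis complete_onI image_eqI)
  qed
qed

lemma verts_complete_on_subset: "verts (complete_on S) \<subseteq> S"
  unfolding complete_on_def verts_def by auto

lemma complete_on_insert:
  "v \<notin> S \<Longrightarrow> complete_on (insert v S) = complete_on S \<union> (\<lambda>y. {v, y}) ` S"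
  unfolding complete_on_def by auto

lemma subset_complete_on_verts: "is_graph G \<Longrightarrow> G \<subseteq> complete_on (verts G)"
proof
  fix e assume "is_graph G" "e \<in> G"
  then obtain a b where "a \<noteq> b" "e = {a, b}" using edge_doubleton by blast
  with \<open>e \<in> G\<close> show "e \<in> complete_on (verts G)"
    using edge_subset_verts[OF \<open>e \<in> G\<close>] by (auto intro: complete_onI)
qed

lemma grank_complete_on:
  assumes fam: "graph_matroid_family M" and "finite T"
  shows "grank M (complete_on T) = grank M (complete_graph (card T))"
proof -
  obtain f where f: "bij_betw f {0..<card T} T" using ex_bij_betw_nat_finite[OF \<open>finite T\<close>] by blast
  then have inj: "inj_on f (verts (complete_graph (card T)))"
    unfolding complete_graph_eq_complete_on bij_betw_def
    using inj_on_subset verts_complete_on_subset by blast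
  have "(`) f ` complete_graph (card T) = complete_on T"
    using f complete_on_image unfolding complete_graph_eq_complete_on bij_betw_def by metis
  then show ?thesis
    using grank_image[OF fam _ inj] is_graph_complete_on
    unfolding complete_graph_eq_complete_on by simp
qed

lemma inj_into_disjoint_parts:
  assumes "finite A'" "finite B'" "A' \<inter> B' = {}" "card A \<le> card A'" "card B \<le> card B'"
    "finite A" "finite B" "A \<inter> B = {}"
  obtains f where "inj_on f (A \<union> B)" "f ` A \<subseteq> A'" "f ` B \<subseteq> B'"
proof -
  obtain g where g: "g ` A \<subseteq> A'" "inj_on g A"
    using card_le_inj[OF \<open>finite A\<close> \<open>finite A'\<close> \<open>card A \<le> card A'\<close>] by blast
  obtain h where h: "h ` B \<subseteq> B'" "inj_on h B"
    using card_le_inj[OF \<open>finite B\<close> \<open>finite B'\<close> \<open>card B \<le> card B'\<close>] by blast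
  define f where "f u = (if u \<in> A then g u else h u)" for u
  have "inj_on f A" using g(2) inj_on_cong[of A f g] unfolding f_def by simp
  moreover have "\<And>u. u \<in> B \<Longrightarrow> f u = h u" using \<open>A \<inter> B = {}\<close> unfolding f_def by auto
  then have "inj_on f B" using h(2) inj_on_cong[of B f h] by simp
  moreover have "f ` A \<subseteq> A'" "f ` B \<subseteq> B'" using g h \<open>A \<inter> B = {}\<close> unfolding f_def by auto
  ultimately have "inj_on f (A \<union> B)" using \<open>A' \<inter> B' = {}\<close> by (auto simp: inj_on_Un)
  then show ?thesis using \<open>f ` A \<subseteq> A'\<close> \<open>f ` B \<subseteq> B'\<close> by (rule that)
qed

lemma inj_on_fun_upd_insert:
  assumes "a \<notin> A" "inj_on f A" "b \<notin> f ` A"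
  shows "inj_on (f(a := b)) (insert a A)"
  using assms by (auto simp: fun_upd_image intro: inj_on_fun_updI)

lemma embedding_through_vertex:
  assumes "finite V" "w \<in> V" "N \<subseteq> V - {w}" "x0 \<in> N" "card V = t + 1" "card N = d + 1"
    and "finite S" "t \<le> card S" "v \<notin> S" "Y \<subseteq> S" "card Y = d" "x \<in> S - Y"
  obtains f where "inj_on f V" "f w = v" "f x0 = x" "f ` (N - {x0}) \<subseteq> Y" "f ` (V - {w}) \<subseteq> S"
proof -
  define R where "R = V - insert w N"
  have "finite N" using \<open>finite V\<close> \<open>N \<subseteq> V - {w}\<close> finite_subset by blast
  have "card (insert w N) = d + 2"
    using \<open>finite N\<close> \<open>N \<subseteq> V - {w}\<close> \<open>card N = d + 1\<close> by (subst card_insert_disjoint) auto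
  then have "card R = t - d - 1"
    unfolding R_def using assms(2,3,5) \<open>finite N\<close> by (subst card_Diff_subset) auto
  moreover have "card (S - Y - {x}) = card S - d - 1"
    using assms(7,10-12) by (simp add: card_Diff_subset finite_subset)
  ultimately have card_R: "card R \<le> card (S - Y - {x})" using \<open>t \<le> card S\<close> by simp
  have card_N: "card (N - {x0}) \<le> card Y" using \<open>finite N\<close> assms(4,6,11) by simp
  obtain g where
    g: "inj_on g ((N - {x0}) \<union> R)" "g ` (N - {x0}) \<subseteq> Y" "g ` R \<subseteq> S - Y - {x}"
  proof (rule inj_into_disjoint_parts[OF _ _ _ card_N card_R])
    show "finite Y" "finite (S - Y - {x})" using assms(7,10) finite_subset by auto
    show "finite (N - {x0})" "finite R" using \<open>finite N\<close> \<open>finite V\<close> unfolding R_def by auto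
    show "Y \<inter> (S - Y - {x}) = {}" "(N - {x0}) \<inter> R = {}" unfolding R_def by auto
  qed
  let ?P = "(N - {x0}) \<union> R"
  have V_eq: "V = insert w (insert x0 ?P)" and "w \<notin> insert x0 ?P" and "x0 \<notin> ?P"
    using assms(2-4) unfolding R_def by auto
  have g_into: "g ` ?P \<subseteq> S - {x}" using g assms(10,12) by auto
  have inj_x0: "inj_on (g(x0 := x)) (insert x0 ?P)"
    using g_into by (intro inj_on_fun_upd_insert[OF \<open>x0 \<notin> ?P\<close> g(1)]) blast
  have into_S: "(g(x0 := x)) ` insert x0 ?P \<subseteq> S"
    using g_into assms(12) \<open>x0 \<notin> ?P\<close> by (auto simp: fun_upd_image)
  have "inj_on (g(x0 := x, w := v)) V"
    unfolding V_eq using into_S \<open>v \<notin> S\<close>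
    by (intro inj_on_fun_upd_insert[OF \<open>w \<notin> insert x0 ?P\<close> inj_x0]) blast
  moreover have "(g(x0 := x, w := v)) ` (V - {w}) \<subseteq> S"
    using into_S \<open>w \<notin> insert x0 ?P\<close> unfolding V_eq by auto
  moreover have "(g(x0 := x, w := v)) ` (N - {x0}) \<subseteq> Y"
    using g(2) assms(3) by auto
  moreover have "(g(x0 := x, w := v)) w = v" "(g(x0 := x, w := v)) x0 = x" using assms(3,4) by auto
  ultimately show ?thesis by (intro that)
qed

lemma circuit_through_new_edge:
  assumes fam: "graph_matroid_family M" and C0: "is_circuit M C0"
    and w0: "w0 \<in> verts C0" "degree C0 w0 = d + 1" "card (verts C0) = t + 1"
    and S: "finite S" "t \<le> card S" "v \<notin> S" "Y \<subseteq> S" "card Y = d" "x \<in> S - Y"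
  obtains C where "is_circuit M C" "{v, x} \<in> C" "C \<subseteq> insert {v, x} (complete_on S \<union> (\<lambda>y. {v, y}) ` Y)"
proof -
  have gC0: "is_graph C0" using is_graph_circuit[OF C0] .
  let ?N = "neighbours C0 w0"
  have N_sub: "?N \<subseteq> verts C0 - {w0}" using neighbours_subset[OF gC0] .
  have card_N: "card ?N = d + 1" using w0(2) degree_eq_card_neighbours[OF gC0] by simp
  then obtain x0 where x0: "x0 \<in> ?N" by (metis card.empty all_not_in_conv add_is_0 one_neq_zero)
  obtain f where f: "inj_on f (verts C0)" "f w0 = v" "f x0 = x" "f ` (?N - {x0}) \<subseteq> Y"
      "f ` (verts C0 - {w0}) \<subseteq> S"
    by (rule embedding_through_vertex[OF finite_verts[OF gC0] w0(1) N_sub x0 w0(3) card_N S])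
  let ?C = "(`) f ` C0"
  have "{w0, x0} \<in> C0" using x0 unfolding neighbours_def by simp
  moreover have "{v, x} = f ` {w0, x0}" using f(2,3) by simp
  ultimately have "{v, x} \<in> ?C" by blast
  moreover have "f ` e \<in> insert {v, x} (complete_on S \<union> (\<lambda>y. {v, y}) ` Y)" if e: "e \<in> C0" for e
  proof -
    obtain a b where ab: "a \<noteq> b" "e = {a, b}" using edge_doubleton[OF gC0 e] by blast
    have ab_verts: "a \<in> verts C0" "b \<in> verts C0" using edge_subset_verts[OF e] ab by auto
    then have "f a \<noteq> f b" using inj_onD[OF f(1)] ab(1) by blast
    show ?thesis
    proof (cases "w0 \<in> e")
      case False
      then have "f a \<in> S" "f b \<in> S" using f(5) ab ab_verts by auto
      then show ?thesis using ab \<open>f a \<noteq> f b\<close> by (auto intro: complete_onI)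
    next
      case True
      then obtain u where u: "e = {w0, u}" using ab by auto
      then have "u \<in> ?N" using e unfolding neighbours_def by simp
      show ?thesis
      proof (cases "u = x0")
        case True
        then show ?thesis using u f(2,3) by simp
      next
        case False
        then have "f u \<in> Y" using f(4) \<open>u \<in> ?N\<close> by blast
        then show ?thesis using u f(2) by simp
      qed
    qed
  qed
  then have "?C \<subseteq> insert {v, x} (complete_on S \<union> (\<lambda>y. {v, y}) ` Y)" by blast
  ultimately show ?thesis using is_circuit_image[OF fam C0 f(1)] by (intro that)
qed

lemma grank_complete_on_insert_le:
  assumes fam: "graph_matroid_family M" and C0: "is_circuit M C0"
    and w0: "w0 \<in> verts C0" "degree C0 w0 = d + 1" "card (verts C0) = t + 1"
    and S: "finite S" "t \<le> card S" "v \<notin> S"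
  shows "grank M (complete_on (insert v S)) \<le> grank M (complete_on S) + d"
proof -
  define E where "E = complete_on (insert v S)"
  have gE: "is_graph E" unfolding E_def using is_graph_complete_on S(1) by simp
  have fE: "finite E" using gE unfolding is_graph_def by simp
  have mE: "matroid E (M E)" using family_matroid[OF fam gE] .
  have "d + 1 \<le> t" using degree_le_card_verts[OF is_graph_circuit[OF C0] w0(1)] w0 by simp
  then obtain Y where Y: "Y \<subseteq> S" "card Y = d" using obtain_subset_with_card_n[of d S] S by auto
  define A where "A = complete_on S \<union> (\<lambda>y. {v, y}) ` Y"
  have E_eq: "E = A \<union> (\<lambda>x. {v, x}) ` (S - Y)"
    unfolding E_def A_def complete_on_insert[OF S(3)] using Y by auto
  have "A \<subseteq> E" using E_eq by blast
  have spanned: "\<forall>e\<in>(\<lambda>x. {v, x}) ` (S - Y). \<exists>Z\<subseteq>A. M E Z \<and> \<not> M E (insert e Z)"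
  proof
    fix e assume e: "e \<in> (\<lambda>x. {v, x}) ` (S - Y)"
    obtain x where x: "x \<in> S - Y" "e = {v, x}" using e by blast
    obtain C where C: "is_circuit M C" "e \<in> C" "C \<subseteq> insert e A"
      using circuit_through_new_edge[OF fam C0 w0 S Y x(1)] unfolding A_def x(2) by blast
    have "C \<subseteq> E" using C(3) \<open>A \<subseteq> E\<close> E_eq e by blast
    then have "M E (C - {e})" "\<not> M E (insert e (C - {e}))"
      using circuit_minus_edge_indep[OF fam C(1,2) _ gE] circuit_dependent[OF fam C(1) _ gE] C(2)
      by (simp_all add: insert_absorb)
    moreover have "C - {e} \<subseteq> A" using C(3) by blast
    ultimately show "\<exists>Z\<subseteq>A. M E Z \<and> \<not> M E (insert e Z)" by blast
  qed
  have fA: "finite A" using \<open>A \<subseteq> E\<close> fE finite_subset by blast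
  have "mrank (M E) (A \<union> (\<lambda>x. {v, x}) ` (S - Y)) = mrank (M E) A"
    using S(1) by (intro mrank_Un_spanned[OF mE fA _ spanned]) simp
  then have "mrank (M E) E = mrank (M E) A" by (simp only: E_eq[symmetric])
  also have "\<dots> \<le> mrank (M E) (complete_on S) + card ((\<lambda>y. {v, y}) ` Y)"
    unfolding A_def using mrank_Un_le_card[OF mE] is_graph_complete_on[OF S(1)] Y(1) S(1)
    by (simp add: is_graph_def finite_subset)
  also have "\<dots> \<le> grank M (complete_on S) + d"
    using grank_subgraph[OF fam gE, of "complete_on S"] \<open>A \<subseteq> E\<close> card_image_le[of Y "\<lambda>y. {v, y}"]
      Y finite_subset[OF Y(1) S(1)] unfolding A_def by auto
  finally show ?thesis unfolding grank_def E_def .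
qed

lemma grank_complete_on_le:
  assumes fam: "graph_matroid_family M" and C0: "is_circuit M C0"
    and w0: "w0 \<in> verts C0" "degree C0 w0 = d + 1" "card (verts C0) = t + 1"
    and "finite S" "t \<le> card S"
  shows "grank M (complete_on S) + d * t \<le> grank M (complete_graph t) + d * card S"
proof -
  obtain T where T: "T \<subseteq> S" "card T = t" using obtain_subset_with_card_n \<open>t \<le> card S\<close> by metis
  have "finite T" using T(1) \<open>finite S\<close> finite_subset by blast
  have "grank M (complete_on (T \<union> A)) \<le> grank M (complete_graph t) + d * card A"
    if "finite A" "A \<inter> T = {}" for A
    using that
  proof (induction A rule: finite_induct)
    case empty
    show ?case using grank_complete_on[OF fam \<open>finite T\<close>] T(2) by simp
  next
    case (insert v A)
    have "grank M (complete_on (insert v (T \<union> A))) \<le> grank M (complete_on (T \<union> A)) + d"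
    proof (rule grank_complete_on_insert_le[OF fam C0 w0])
      show "finite (T \<union> A)" using \<open>finite T\<close> insert.hyps(1) by simp
      show "t \<le> card (T \<union> A)" using T(2) card_mono[OF \<open>finite (T \<union> A)\<close>, of T] by simp
      show "v \<notin> T \<union> A" using insert.hyps(2) insert.prems by blast
    qed
    then show ?case using insert by simp
  qed
  from this[of "S - T"] have "grank M (complete_on S) \<le> grank M (complete_graph t) + d * card (S - T)"
    using T(1) \<open>finite S\<close> by (simp add: Un_absorb1 Un_Diff_cancel Diff_disjoint Int_commute)
  moreover have "card (S - T) + t = card S"
    using T card_Diff_subset[OF \<open>finite T\<close> T(1)] card_mono[OF \<open>finite S\<close> T(1)] by simp
  then have "d * card S = d * card (S - T) + d * t" by (metis add_mult_distrib2)
  ultimately show ?thesis by linarith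
qed

lemma grank_le_threshold_bound:
  assumes fam: "graph_matroid_family M" and "nontrivial_family M" and G: "is_graph G"
    and "threshold M \<le> card (verts G)"
  shows "grank M G + dimensionality M * threshold M
    \<le> grank M (complete_graph (threshold M)) + dimensionality M * card (verts G)"
proof -
  obtain C0 w where C0: "is_circuit M C0" "w \<in> verts C0" "degree C0 w = dimensionality M + 1"
    "card (verts C0) = threshold M + 1"
    using threshold_circuit_exists[OF fam \<open>nontrivial_family M\<close>] by blast
  have "grank M G \<le> grank M (complete_on (verts G))"
    using grank_mono[OF fam is_graph_complete_on subset_complete_on_verts] finite_verts G by blast
  then show ?thesis
    using grank_complete_on_le[OF fam C0 finite_verts[OF G] \<open>threshold M \<le> card (verts G)\<close>] by linarith
qed

section \<open>A vertex of small rank drop\<close>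

lemma indep_if_low_degree_endpoints:
  assumes fam: "graph_matroid_family M" and G: "is_graph G" and "D \<subseteq> G"
    and low: "\<forall>e\<in>D. \<exists>w\<in>e. degree D w \<le> dimensionality M"
  shows "M G D"
proof (rule ccontr)
  assume "\<not> M G D"
  then obtain C where C: "C \<subseteq> D" "is_circuit M C"
    using dependent_contains_circuit[OF fam G \<open>D \<subseteq> G\<close>] by blast
  obtain e where "e \<in> C" using circuit_nonempty[OF C(2)] by blast
  then obtain w where w: "w \<in> e" "degree D w \<le> dimensionality M" using low C(1) by blast
  have "w \<in> verts C" using \<open>e \<in> C\<close> w(1) unfolding verts_def by blast
  then have "dimensionality M + 1 \<le> degree C w" by (rule degree_circuit_ge[OF fam C(2)])
  moreover have "degree C w \<le> degree D w"
    using degree_mono[OF is_graph_subset[OF G \<open>D \<subseteq> G\<close>] C(1)] .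
  ultimately show False using w(2) by linarith
qed

lemma card_indep_le_grank_delete_vertex:
  assumes fam: "graph_matroid_family M" and G: "is_graph G" and "B \<subseteq> G" "M G B"
  shows "card B \<le> grank M (delete_vertex G w) + degree B w"
proof -
  let ?B' = "{e\<in>B. w \<notin> e}"
  have sub: "delete_vertex G w \<subseteq> G" unfolding delete_vertex_def by blast
  have B'_sub: "?B' \<subseteq> delete_vertex G w" using \<open>B \<subseteq> G\<close> unfolding delete_vertex_def by blast
  have "M G ?B'" by (rule matroid_indep_subset[OF family_matroid[OF fam G] \<open>M G B\<close>]) blast
  then have "M (delete_vertex G w) ?B'" using family_restrict[OF fam G sub] B'_sub by blast
  moreover have "finite (delete_vertex G w)" using is_graph_subset[OF G sub] unfolding is_graph_def by simp
  ultimately have "card ?B' \<le> grank M (delete_vertex G w)"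
    unfolding grank_def using card_le_mrank B'_sub by blast
  moreover have "B = ?B' \<union> {e\<in>B. w \<in> e}" by blast
  then have "card B \<le> card ?B' + degree B w" unfolding degree_def by (metis card_Un_le)
  ultimately show ?thesis by linarith
qed

lemma dominating_star_forest:
  assumes G: "is_graph G" and dom: "d_dominating G d U"
  obtains D where "D \<subseteq> G" "card D = d * card (verts G - U)"
    "\<forall>w\<in>verts G - U. degree D w = d" "\<forall>e\<in>D. e \<inter> (verts G - U) \<noteq> {}"
proof -
  define W where "W = verts G - U"
  have "\<forall>w\<in>W. \<exists>N. N \<subseteq> {u\<in>U. {u, w} \<in> G} \<and> card N = d"
  proof
    fix w assume "w \<in> W"
    then have "d \<le> card {u\<in>U. {u, w} \<in> G}" using dom unfolding d_dominating_def W_def by blast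
    then obtain N where "N \<subseteq> {u\<in>U. {u, w} \<in> G}" "card N = d" by (rule obtain_subset_with_card_n)
    then show "\<exists>N. N \<subseteq> {u\<in>U. {u, w} \<in> G} \<and> card N = d" by blast
  qed
  then obtain N where N: "\<And>w. w \<in> W \<Longrightarrow> N w \<subseteq> {u\<in>U. {u, w} \<in> G} \<and> card (N w) = d"
    by metis
  have N_U: "N w \<subseteq> U" if "w \<in> W" for w using N[OF that] by blast
  have "U \<subseteq> verts G" using dom unfolding d_dominating_def by blast
  then have fin_N: "finite (N w)" if "w \<in> W" for w
    using N_U[OF that] \<open>U \<subseteq> verts G\<close> by (intro finite_subset[OF _ finite_verts[OF G]]) blast
  define star where "star w = (\<lambda>u. {w, u}) ` N w" for w
  define D where "D = (\<Union>w\<in>W. star w)"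
  have center_unique: "i = j" if "e \<in> star j" "i \<in> e" "i \<in> W" "j \<in> W" for e i j
    using that N_U unfolding star_def W_def by blast
  have edges_at: "{e\<in>D. w \<in> e} = star w" if "w \<in> W" for w
    using center_unique that unfolding D_def star_def by blast
  have card_star: "card (star w) = d" if "w \<in> W" for w
  proof -
    have "inj_on (\<lambda>u. {w, u}) (N w)" by (auto intro: inj_onI simp: doubleton_eq_iff)
    then show ?thesis unfolding star_def using N[OF that] by (simp add: card_image)
  qed
  have "D \<subseteq> G" unfolding D_def star_def using N by (auto simp: insert_commute)
  moreover have "card D = d * card W"
  proof -
    have "card D = (\<Sum>w\<in>W. card (star w))" unfolding D_def
    proof (rule card_UN_disjoint)
      show "finite W" unfolding W_def using finite_verts[OF G] by blast
      show "\<forall>w\<in>W. finite (star w)" unfolding star_def using fin_N by blast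
      show "\<forall>i\<in>W. \<forall>j\<in>W. i \<noteq> j \<longrightarrow> star i \<inter> star j = {}"
        using center_unique unfolding star_def by blast
    qed
    then show ?thesis using card_star by simp
  qed
  moreover have "\<forall>w\<in>W. degree D w = d" using edges_at card_star unfolding degree_def by simp
  moreover have "\<forall>e\<in>D. e \<inter> W \<noteq> {}" unfolding D_def star_def by blast
  ultimately show ?thesis unfolding W_def by (rule that)
qed

text \<open>The bound on \<open>grank M G\<close> says that fewer than \<open>|W|/2\<close> edges of a basis lie outside the
  star forest, where \<open>W = V(G) - U\<close>.\<close>

lemma exists_vertex_rank_drop_le_dimensionality:
  assumes fam: "graph_matroid_family M" and G: "is_graph G"
    and dom: "d_dominating G (dimensionality M) U"
    and small: "2 * grank M G < (2 * dimensionality M + 1) * card (verts G - U)"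
  shows "\<exists>w\<in>verts G. grank M G \<le> grank M (delete_vertex G w) + dimensionality M"
proof -
  define d where "d = dimensionality M"
  define W where "W = verts G - U"
  obtain D where D: "D \<subseteq> G" "card D = d * card W" "\<forall>w\<in>W. degree D w = d" "\<forall>e\<in>D. e \<inter> W \<noteq> {}"
    using dominating_star_forest[OF G dom] unfolding d_def W_def by blast
  have "\<forall>e\<in>D. \<exists>w\<in>e. degree D w \<le> dimensionality M" using D(3,4) unfolding d_def by fastforce
  then have "M G D" by (rule indep_if_low_degree_endpoints[OF fam G D(1)])
  have fG: "finite G" using G unfolding is_graph_def by simp
  obtain B where B: "D \<subseteq> B" "B \<subseteq> G" "M G B" "\<forall>e\<in>G - B. \<not> M G (insert e B)"
    using matroid_extend_to_maximal_indep[of G D "M G", OF fG D(1) \<open>M G D\<close>] by blast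
  have card_B: "card B = grank M G"
    unfolding grank_def by (rule card_maximal_indep_eq_mrank[OF family_matroid[OF fam G] fG B(2-4)])
  define X where "X = B - D"
  have "card X + card D = card B"
    unfolding X_def using B(1,2) fG finite_subset card_Diff_subset card_mono by (metis le_add_diff_inverse2)
  then have "2 * card X < card W" using small card_B D(2) unfolding W_def d_def by simp
  moreover have "is_graph X" using is_graph_subset[OF G] B(2) unfolding X_def by blast
  ultimately have "card (verts X) < card W" using card_verts_le by fastforce
  then have "\<not> W \<subseteq> verts X" using card_mono[OF finite_verts[OF \<open>is_graph X\<close>], of W] by linarith
  then obtain w where w: "w \<in> W" "w \<notin> verts X" by blast
  have "{e\<in>B. w \<in> e} \<subseteq> {e\<in>D. w \<in> e}" using w(2) unfolding X_def verts_def by blast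
  then have "degree B w \<le> degree D w"
    unfolding degree_def using finite_subset[OF D(1) fG] by (intro card_mono) auto
  then have "degree B w \<le> d" using D(3) w(1) by simp
  then have "grank M G \<le> grank M (delete_vertex G w) + d"
    using card_indep_le_grank_delete_vertex[OF fam G B(2,3), of w] card_B by linarith
  then show ?thesis using w(1) unfolding W_def d_def by blast
qed

text \<open>For \<open>d = 0\<close> the first hypothesis forces \<open>u = 0\<close>, since \<open>1 / 0 = 0\<close>.\<close>

lemma rank_budget_lt_card:
  fixes r0 :: int and d u n :: nat
  assumes "real u \<le> 1 / (6 * real d) * real n" and "6 * r0 < int n"
  shows "2 * r0 + 2 * int d * int u + int u < int n"
proof (cases "d = 0")
  case True
  then show ?thesis using assms by simp
next
  case False
  then have "real (6 * d * u) \<le> real n" using assms(1) by (simp add: field_simps)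
  then have "int (6 * d * u) \<le> int n" by (simp only: of_nat_le_iff)
  then have "6 * (int d * int u) \<le> int n" by simp
  moreover have "int u \<le> int d * int u" using False by (simp add: mult_le_cancel_right1)
  ultimately show ?thesis using assms(2) by linarith
qed

theorem lemma3p20:
  fixes M :: "graph \<Rightarrow> nat set set \<Rightarrow> bool"
    and d t \<delta> :: nat and r0 :: int and \<epsilon> :: real and G :: graph
  assumes "graph_matroid_family M"
    and "nontrivial_family M" and "unbounded_family M"
    and "d = dimensionality M" and "t = threshold M"
    and "r0 = int (grank M (complete_graph t)) - int d * int t"
    and "\<epsilon> = 1 / (6 * real d)"
    and "0 < \<delta>" and "6 * r0 \<le> int \<delta>" and "t \<le> \<delta>"
    and "\<forall>H. is_graph H \<and> H \<noteq> {} \<and> \<delta> \<le> min_degree H \<longrightarrow>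
           (\<exists>U. d_dominating H d U \<and> real (card U) \<le> \<epsilon> * real (card (verts H)))"
    and "is_graph G" and "G \<noteq> {}" and "\<delta> \<le> min_degree G"
  shows "\<exists>v0\<in>verts G. grank M G \<le> grank M (delete_vertex G v0) + d"
proof -
  let ?n = "card (verts G)"
  have "\<delta> < ?n" using assms(14) min_degree_less_card_verts[OF assms(12,13)] by linarith
  then have "grank M G + d * t \<le> grank M (complete_graph t) + d * ?n"
    using grank_le_threshold_bound[OF assms(1,2,12)] assms(4,5,10) by simp
  then have "int (grank M G) + int d * int t \<le> int (grank M (complete_graph t)) + int d * int ?n"
    by (metis of_nat_add of_nat_le_iff of_nat_mult)
  then have rank_bound: "int (grank M G) \<le> r0 + int d * int ?n" using assms(6) by linarith
  obtain U where U: "d_dominating G d U" "real (card U) \<le> \<epsilon> * real ?n"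
    using assms(11-14) by blast
  have "U \<subseteq> verts G" using U(1) unfolding d_dominating_def by blast
  then have card_W: "int (card (verts G - U)) = int ?n - int (card U)"
    using finite_verts[OF assms(12)] by (simp add: card_Diff_subset card_mono finite_subset of_nat_diff)
  have "2 * r0 + 2 * int d * int (card U) + int (card U) < int ?n"
    using rank_budget_lt_card U(2) assms(7,9) \<open>\<delta> < ?n\<close> by simp
  then have "int (2 * grank M G) < int ((2 * d + 1) * card (verts G - U))"
    using rank_bound unfolding of_nat_mult card_W by (simp add: algebra_simps)
  then have "2 * grank M G < (2 * d + 1) * card (verts G - U)" by (simp only: of_nat_less_iff)
  then show ?thesis
    using exists_vertex_rank_drop_le_dimensionality[OF assms(1,12)] U(1) assms(4) by blast
qed

end
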